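(* Let $\rho$ be a nonuniform congruence on the symplectic rook monoid $\mathcal{SR}_n$ ($n=2m\ge2$). Then there is either some $k\in\{1,\dots,m\}$ and a normal subgroup $N\unlhd S_k$, or (with $k=n$) a normal subgroup $N\unlhd W$, such that $\rho$ coincides with $\equiv_N$.
   Context: Let $m\ge 1$, $n=2m$, $\mathbf n=\{1,\dots,n\}$, $\theta(i)=n+1-i$, written $\bar i$. A proper subset $I\subset\mathbf n$ is admissible if $I\cap\theta(I)=\emptyset$; $\mathbf n$ and $\emptyset$ are also declared admissible. For an injective partial map $\sigma$ of $\mathbf n$, $I(\sigma)$ is its domain, $J(\sigma)$ its image, $\mathrm{rk}(\sigma)=|I(\sigma)|$; products are compositions of partial maps. $W=\{\sigma\in S_n:\sigma(\bar i)=\overline{\sigma(i)}\ \forall i\}$. $\mathcal{SR}_n$ is the monoid of all injective partial maps $\sigma$ of $\mathbf n$ such that either both $I(\sigma),J(\sigma)$ are proper admissible subsets, or $\sigma\in W$. A congruence is nonuniform if it is not the universal relation. Write $\sigma\mathcal H\tau$ if $I(\sigma)=I(\tau)$ and $J(\sigma)=J(\tau)$. For $k\in\{1,\dots,m\}$ and $N\unlhd S_k$, and for $\sigma\mathcal H\tau$ of rank $k$, "$\tau=\mu(\sigma)$ with $\mu\in N$" means: for an enumeration $a_1,\dots,a_k$ of $I(\sigma)$ with $b_i=\sigma(a_i)$, $\tau(a_i)=b_{\mu(i)}$ for all $i$. For $k=n$ and $N\unlhd W$, for $\sigma,\tau$ of rank $n$ it means $\tau=\sigma\mu$ (i.e.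 $\tau(i)=\sigma(\mu(i))$) with $\mu\in N$. The relation $\equiv_N$ on $\mathcal{SR}_n$: if $\mathrm{rk}(\sigma)<k$, then $\sigma\equiv_N\tau$ iff $\mathrm{rk}(\tau)<k$; if $\mathrm{rk}(\sigma)=k$, then $\sigma\equiv_N\tau$ iff $\sigma\mathcal H\tau$ and $\tau=\mu(\sigma)$ for some $\mu\in N$; if $\mathrm{rk}(\sigma)>k$, then $\sigma\equiv_N\tau$ iff $\sigma=\tau$. *)

theory Defs
  imports "HOL-Algebra.Sym_Groups"
begin

text \<open>Injective partial maps of {1..n} are modelled as maps nat \<rightharpoonup> nat.\<close>

definition theta :: "nat \<Rightarrow> nat \<Rightarrow> nat" where
  "theta n i = n + 1 - i"

definition admissible :: "nat \<Rightarrow> nat set \<Rightarrow> bool" where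
  "admissible n I \<longleftrightarrow> I \<subseteq> {1..n} \<and> (I = {1..n} \<or> I \<inter> theta n ` I = {})"

definition proper_admissible :: "nat \<Rightarrow> nat set \<Rightarrow> bool" where
  "proper_admissible n I \<longleftrightarrow> admissible n I \<and> I \<noteq> {1..n}"

definition partial_inj :: "nat \<Rightarrow> (nat \<rightharpoonup> nat) \<Rightarrow> bool" where
  "partial_inj n \<sigma> \<longleftrightarrow> dom \<sigma> \<subseteq> {1..n} \<and> ran \<sigma> \<subseteq> {1..n} \<and> inj_on \<sigma> (dom \<sigma>)"

definition rk :: "(nat \<rightharpoonup> nat) \<Rightarrow> nat" where
  "rk \<sigma> = card (dom \<sigma>)"

definition inW :: "nat \<Rightarrow> (nat \<rightharpoonup> nat) \<Rightarrow> bool" where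
  "inW n \<sigma> \<longleftrightarrow> partial_inj n \<sigma> \<and> dom \<sigma> = {1..n} \<and> ran \<sigma> = {1..n} \<and>
     (\<forall>i\<in>{1..n}. \<sigma> (theta n i) = map_option (theta n) (\<sigma> i))"

definition SR :: "nat \<Rightarrow> (nat \<rightharpoonup> nat) set" where
  "SR n = {\<sigma>. partial_inj n \<sigma> \<and>
     ((proper_admissible n (dom \<sigma>) \<and> proper_admissible n (ran \<sigma>)) \<or> inW n \<sigma>)}"

definition is_congruence :: "nat \<Rightarrow> ((nat \<rightharpoonup> nat) \<times> (nat \<rightharpoonup> nat)) set \<Rightarrow> bool" where
  "is_congruence n \<rho> \<longleftrightarrow> equiv (SR n) \<rho> \<and>
     (\<forall>a b c. (a, b) \<in> \<rho> \<and> c \<in> SR n \<longrightarrow>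
        (c \<circ>\<^sub>m a, c \<circ>\<^sub>m b) \<in> \<rho> \<and> (a \<circ>\<^sub>m c, b \<circ>\<^sub>m c) \<in> \<rho>)"

definition W_group :: "nat \<Rightarrow> (nat \<Rightarrow> nat) monoid" where
  "W_group n = \<lparr>carrier = {p. p permutes {1..n} \<and> (\<forall>i\<in>{1..n}. p (theta n i) = theta n (p i))},
                mult = (\<circ>), one = id\<rparr>"

definition H_rel :: "(nat \<rightharpoonup> nat) \<Rightarrow> (nat \<rightharpoonup> nat) \<Rightarrow> bool" where
  "H_rel \<sigma> \<tau> \<longleftrightarrow> dom \<sigma> = dom \<tau> \<and> ran \<sigma> = ran \<tau>"

definition congS :: "nat \<Rightarrow> nat \<Rightarrow> (nat \<Rightarrow> nat) set \<Rightarrow> ((nat \<rightharpoonup> nat) \<times> (nat \<rightharpoonup> nat)) set" where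
  "congS n k N = {(\<sigma>, \<tau>). \<sigma> \<in> SR n \<and> \<tau> \<in> SR n \<and>
     (if rk \<sigma> < k then rk \<tau> < k
      else if rk \<sigma> = k then H_rel \<sigma> \<tau> \<and>
        (\<exists>a. bij_betw a {1..k} (dom \<sigma>) \<and>
           (\<exists>\<mu>\<in>N. \<forall>i\<in>{1..k}. \<tau> (a i) = \<sigma> (a (\<mu> i))))
      else \<sigma> = \<tau>)}"

definition congW :: "nat \<Rightarrow> (nat \<Rightarrow> nat) set \<Rightarrow> ((nat \<rightharpoonup> nat) \<times> (nat \<rightharpoonup> nat)) set" where
  "congW n N = {(\<sigma>, \<tau>). \<sigma> \<in> SR n \<and> \<tau> \<in> SR n \<and>
     (if rk \<sigma> < n then rk \<tau> < n
      else if rk \<sigma> = n then (\<exists>\<mu>\<in>N. \<forall>i\<in>{1..n}. \<tau> i = \<sigma> (\<mu> i))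
      else \<sigma> = \<tau>)}"

end

theory Submission
  imports Defs
begin

text \<open>
  The class of the empty map under a congruence \<rho> is an ideal of \<open>SR\<^sub>n\<close>. Since a map
  factors through every map of at least its rank, this ideal consists exactly of the maps of rank
  at most some \<open>j\<close>, and \<open>j \<le> m\<close> unless \<rho> is universal. Restricting a related pair to
  admissible sets through a point where the domains (or ranges) differ gives related pairs of
  every rank \<open>s\<close> whose partners have rank below \<open>s\<close>; this pulls the rank of the pair into
  the ideal, so related pairs above rank \<open>j\<close> are \<open>\<H>\<close>-related. Two distinct \<open>\<H>\<close>-related
  maps likewise give an element of the ideal of rank one less (of rank \<open>m\<close> inside \<open>W\<close>), so
  \<rho> is trivial above rank \<open>k = j + 1\<close> (above \<open>k = n\<close> when \<open>j = m\<close>). Finally, composing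
  with a bijection from \<open>{1..k}\<close> onto the domain transports \<rho> on an \<open>\<H>\<close>-class of rank
  \<open>k\<close> to the group \<open>\<H>\<close>-class of the identity on \<open>{1..k}\<close>, where it is given by the normal
  subgroup of permutations related to the identity.
\<close>

section \<open>Partial injections\<close>

definition pmap :: "'a set \<Rightarrow> ('a \<Rightarrow> 'b) \<Rightarrow> ('a \<rightharpoonup> 'b)" where
  "pmap S f = (\<lambda>x. if x \<in> S then Some (f x) else None)"

abbreviation id_on :: "'a set \<Rightarrow> ('a \<rightharpoonup> 'a)" where
  "id_on S \<equiv> pmap S id"

definition pinv :: "('a \<rightharpoonup> 'b) \<Rightarrow> ('b \<rightharpoonup> 'a)" where
  "pinv \<phi> = (\<lambda>y. if y \<in> ran \<phi> then Some (SOME x. \<phi> x = Some y) else None)"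

lemma pmap_in [simp]: "x \<in> S \<Longrightarrow> pmap S f x = Some (f x)"
  and pmap_out [simp]: "x \<notin> S \<Longrightarrow> pmap S f x = None"
  by (simp_all add: pmap_def)

lemma dom_pmap [simp]: "dom (pmap S f) = S"
  by (auto simp: pmap_def dom_def)

lemma ran_pmap [simp]: "ran (pmap S f) = f ` S"
  by (auto simp: pmap_def ran_def)

lemma inj_on_pmap: "inj_on f S \<Longrightarrow> inj_on (pmap S f) S"
  by (auto simp: pmap_def inj_on_def)

lemma pmap_map_comp: "f ` S \<subseteq> S \<Longrightarrow> pmap S g \<circ>\<^sub>m pmap S f = pmap S (g \<circ> f)"
  by (rule ext) (auto simp: pmap_def)

lemma map_comp_id_on: "\<sigma> \<circ>\<^sub>m id_on E = \<sigma> |` E"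
  by (rule ext) (simp add: pmap_def restrict_map_def)

lemma restrict_map_dom_subset: "dom \<sigma> \<subseteq> E \<Longrightarrow> \<sigma> |` E = \<sigma>"
  by (rule ext) (metis domIff restrict_in restrict_out subsetD)

lemma id_on_map_comp: "ran \<sigma> \<subseteq> E \<Longrightarrow> id_on E \<circ>\<^sub>m \<sigma> = \<sigma>"
  by (rule ext) (auto simp: pmap_def map_comp_def ran_def split: option.splits)

lemma ran_id_on_map_comp: "ran (id_on E \<circ>\<^sub>m \<sigma>) = E \<inter> ran \<sigma>"
  by (auto simp: ran_def map_comp_Some_iff pmap_def)

lemma map_comp_assoc: "(f \<circ>\<^sub>m g) \<circ>\<^sub>m h = f \<circ>\<^sub>m (g \<circ>\<^sub>m h)"
  by (rule ext) (simp add: map_comp_def split: option.splits)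

lemma dom_map_comp: "dom (f \<circ>\<^sub>m g) = {x. \<exists>y\<in>dom f. g x = Some y}"
  by (auto simp: map_comp_Some_iff)

lemma ran_map_comp: "ran (f \<circ>\<^sub>m g) = {z. \<exists>y\<in>ran g. f y = Some z}"
  by (auto simp: ran_def map_comp_Some_iff)

lemma ran_map_comp_subset: "ran (f \<circ>\<^sub>m g) \<subseteq> ran f"
  by (auto simp: ran_def map_comp_Some_iff)

lemma dom_map_comp_subset: "dom (f \<circ>\<^sub>m g) \<subseteq> dom g"
  by (auto simp: map_comp_Some_iff)

lemma inj_on_map_comp:
  "inj_on f (dom f) \<Longrightarrow> inj_on g (dom g) \<Longrightarrow> inj_on (f \<circ>\<^sub>m g) (dom (f \<circ>\<^sub>m g))"
  unfolding inj_on_def dom_def map_comp_def by (auto split: option.splits)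

lemma card_ran_eq_card_dom:
  assumes "inj_on \<sigma> (dom \<sigma>)" shows "card (ran \<sigma>) = card (dom \<sigma>)"
proof -
  have "ran \<sigma> = (\<lambda>x. the (\<sigma> x)) ` dom \<sigma>" by (force simp: ran_def dom_def)
  moreover have "inj_on (\<lambda>x. the (\<sigma> x)) (dom \<sigma>)"
    using assms by (auto simp: inj_on_def dom_def)
  ultimately show ?thesis by (simp add: card_image)
qed

lemma pinv_Some_iff:
  assumes "inj_on \<phi> (dom \<phi>)" shows "pinv \<phi> y = Some x \<longleftrightarrow> \<phi> x = Some y"
proof
  assume "pinv \<phi> y = Some x"
  then have "y \<in> ran \<phi>" "x = (SOME x. \<phi> x = Some y)" by (auto simp: pinv_def split: if_splits)
  then show "\<phi> x = Some y" by (auto simp: ran_def intro: someI)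
next
  assume x: "\<phi> x = Some y"
  with assms have "(SOME x. \<phi> x = Some y) = x"
    by (intro some_equality) (auto simp: inj_on_def dom_def)
  with x show "pinv \<phi> y = Some x" by (auto simp: pinv_def ranI)
qed

lemma dom_pinv [simp]: "dom (pinv \<phi>) = ran \<phi>"
  by (auto simp: pinv_def dom_def)

lemma ran_pinv: "inj_on \<phi> (dom \<phi>) \<Longrightarrow> ran (pinv \<phi>) = dom \<phi>"
  by (auto simp: ran_def pinv_Some_iff)

lemma inj_on_pinv: "inj_on \<phi> (dom \<phi>) \<Longrightarrow> inj_on (pinv \<phi>) (dom (pinv \<phi>))"
  by (rule inj_onI) (metis domD dom_pinv option.inject pinv_Some_iff)

lemma pinv_map_comp_self: "inj_on \<phi> (dom \<phi>) \<Longrightarrow> pinv \<phi> \<circ>\<^sub>m \<phi> = id_on (dom \<phi>)"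
  by (rule ext) (auto simp: map_comp_def pmap_def pinv_Some_iff split: option.splits)

lemma map_comp_pinv_self:
  assumes "inj_on \<phi> (dom \<phi>)" shows "\<phi> \<circ>\<^sub>m pinv \<phi> = id_on (ran \<phi>)"
proof
  fix y show "(\<phi> \<circ>\<^sub>m pinv \<phi>) y = id_on (ran \<phi>) y"
  proof (cases "y \<in> ran \<phi>")
    case True
    then obtain x where "\<phi> x = Some y" by (auto simp: ran_def)
    with True show ?thesis using pinv_Some_iff[OF assms] by auto
  qed (simp add: pinv_def)
qed

lemma pmap_of_map:
  assumes "finite S" "dom M = S" "ran M \<subseteq> S" "inj_on M S"
  obtains \<mu> where "\<mu> permutes S" "M = pmap S \<mu>"
proof
  define \<mu> where "\<mu> = (\<lambda>i. if i \<in> S then the (M i) else i)"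
  have M: "M i = Some (\<mu> i)" if "i \<in> S" for i
    using that assms(2) by (auto simp: \<mu>_def)
  have "inj_on \<mu> S"
    by (rule inj_onI) (metis M assms(4) inj_onD)
  moreover have "\<mu> ` S \<subseteq> S"
    using M assms(3) by (auto intro: ranI)
  ultimately have "bij_betw \<mu> S S"
    using endo_inj_surj[OF assms(1)] by (simp add: bij_betw_def)
  then show "\<mu> permutes S"
    by (rule bij_imp_permutes) (simp add: \<mu>_def)
  show "M = pmap S \<mu>"
    using M assms(2) by (auto simp: pmap_def)
qed

lemma dom_ran_map_comp_onto:
  assumes "ran A = dom \<sigma>" shows "dom (\<sigma> \<circ>\<^sub>m A) = dom A" and "ran (\<sigma> \<circ>\<^sub>m A) = ran \<sigma>"
proof -
  have A_to: "\<exists>z. \<sigma> y = Some z" if "A x = Some y" for x y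
    using that assms by (auto simp: ran_def set_eq_iff)
  have A_from: "\<exists>x. A x = Some y" if "\<sigma> y = Some z" for y z
    using that assms by (auto simp: ran_def set_eq_iff)
  show "dom (\<sigma> \<circ>\<^sub>m A) = dom A"
    by (auto simp: map_comp_Some_iff dest: A_to)
  show "ran (\<sigma> \<circ>\<^sub>m A) = ran \<sigma>"
    by (auto simp: ran_def map_comp_Some_iff) (metis A_from)
qed

text \<open>Composing with \<open>B = \<sigma> \<circ>\<^sub>m A\<close> or its inverse on the left and with \<open>A\<close> or its
  inverse on the right passes back and forth between the pairs \<open>(\<sigma>, \<tau>)\<close> and
  \<open>(id_on (dom A), pinv B \<circ>\<^sub>m \<tau> \<circ>\<^sub>m A)\<close>.\<close>

lemma transport_identities:
  assumes A: "inj_on A (dom A)" and \<sigma>: "inj_on \<sigma> (dom \<sigma>)" and ran_A: "ran A = dom \<sigma>"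
    and dom_\<tau>: "dom \<tau> = dom \<sigma>" and ran_\<tau>: "ran \<tau> \<subseteq> ran \<sigma>"
  shows "pinv (\<sigma> \<circ>\<^sub>m A) \<circ>\<^sub>m (\<sigma> \<circ>\<^sub>m A) = id_on (dom A)"
    and "(\<sigma> \<circ>\<^sub>m A) \<circ>\<^sub>m id_on (dom A) \<circ>\<^sub>m pinv A = \<sigma>"
    and "(\<sigma> \<circ>\<^sub>m A) \<circ>\<^sub>m (pinv (\<sigma> \<circ>\<^sub>m A) \<circ>\<^sub>m (\<tau> \<circ>\<^sub>m A)) = \<tau> \<circ>\<^sub>m A"
    and "\<tau> \<circ>\<^sub>m A \<circ>\<^sub>m pinv A = \<tau>"
proof -
  let ?B = "\<sigma> \<circ>\<^sub>m A"
  have dom_B: "dom ?B = dom A" and ran_B: "ran ?B = ran \<sigma>"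
    using dom_ran_map_comp_onto[OF ran_A] by simp_all
  have B: "inj_on ?B (dom ?B)"
    using inj_on_map_comp[OF \<sigma> A] .
  have A_pinv: "A \<circ>\<^sub>m pinv A = id_on (dom \<sigma>)"
    using map_comp_pinv_self[OF A] ran_A by simp
  show "pinv ?B \<circ>\<^sub>m ?B = id_on (dom A)"
    using pinv_map_comp_self[OF B] dom_B by simp
  have "?B \<circ>\<^sub>m id_on (dom A) = ?B"
    using dom_B by (simp add: map_comp_id_on restrict_map_dom_subset)
  then show "?B \<circ>\<^sub>m id_on (dom A) \<circ>\<^sub>m pinv A = \<sigma>"
    by (simp add: map_comp_assoc A_pinv map_comp_id_on restrict_map_dom_subset)
  show "?B \<circ>\<^sub>m (pinv ?B \<circ>\<^sub>m (\<tau> \<circ>\<^sub>m A)) = \<tau> \<circ>\<^sub>m A"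
    using map_comp_pinv_self[OF B] ran_B ran_\<tau> ran_map_comp[of \<tau> A]
    by (simp add: map_comp_assoc[symmetric] id_on_map_comp)
  show "\<tau> \<circ>\<^sub>m A \<circ>\<^sub>m pinv A = \<tau>"
    using dom_\<tau> by (simp add: map_comp_assoc A_pinv map_comp_id_on restrict_map_dom_subset)
qed

lemma transport_eq_pmap_iff:
  assumes \<sigma>: "inj_on \<sigma> (dom \<sigma>)" and a: "bij_betw a S (dom \<sigma>)"
    and dom_\<tau>: "dom \<tau> = dom \<sigma>" and ran_\<tau>: "ran \<tau> \<subseteq> ran \<sigma>" and \<mu>: "\<mu> ` S \<subseteq> S"
  shows "pinv (\<sigma> \<circ>\<^sub>m pmap S a) \<circ>\<^sub>m (\<tau> \<circ>\<^sub>m pmap S a) = pmap S \<mu>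
    \<longleftrightarrow> (\<forall>i\<in>S. \<tau> (a i) = \<sigma> (a (\<mu> i)))"
proof -
  let ?A = "pmap S a" and ?B = "\<sigma> \<circ>\<^sub>m pmap S a"
  have A: "inj_on ?A (dom ?A)" and ran_A: "ran ?A = dom \<sigma>"
    using a by (auto simp: bij_betw_def intro: inj_on_pmap)
  have B: "inj_on ?B (dom ?B)"
    using inj_on_map_comp[OF \<sigma> A] .
  show ?thesis
  proof
    assume "pinv ?B \<circ>\<^sub>m (\<tau> \<circ>\<^sub>m ?A) = pmap S \<mu>"
    then have B_\<mu>: "?B \<circ>\<^sub>m pmap S \<mu> = \<tau> \<circ>\<^sub>m ?A"
      using transport_identities(3)[OF A \<sigma> ran_A dom_\<tau> ran_\<tau>] by simp
    show "\<forall>i\<in>S. \<tau> (a i) = \<sigma> (a (\<mu> i))"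
    proof
      fix i assume i: "i \<in> S"
      with \<mu> have "\<mu> i \<in> S" by auto
      with i show "\<tau> (a i) = \<sigma> (a (\<mu> i))" using fun_cong[OF B_\<mu>, of i] by simp
    qed
  next
    assume eq: "\<forall>i\<in>S. \<tau> (a i) = \<sigma> (a (\<mu> i))"
    show "pinv ?B \<circ>\<^sub>m (\<tau> \<circ>\<^sub>m ?A) = pmap S \<mu>"
    proof
      fix i show "(pinv ?B \<circ>\<^sub>m (\<tau> \<circ>\<^sub>m ?A)) i = pmap S \<mu> i"
      proof (cases "i \<in> S")
        case True
        with \<mu> have \<mu>_i: "\<mu> i \<in> S" by auto
        with a have "a (\<mu> i) \<in> dom \<sigma>" by (auto simp: bij_betw_def)
        then obtain y where y: "\<sigma> (a (\<mu> i)) = Some y" by blast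
        with \<mu>_i have "?B (\<mu> i) = Some y" by simp
        with y True eq show ?thesis using pinv_Some_iff[OF B] by simp
      qed simp
    qed
  qed
qed

lemma transport_is_pmap:
  assumes \<sigma>: "inj_on \<sigma> (dom \<sigma>)" and \<tau>: "inj_on \<tau> (dom \<tau>)" and a: "bij_betw a S (dom \<sigma>)"
    and "finite S" and dom_\<tau>: "dom \<tau> = dom \<sigma>" and ran_\<tau>: "ran \<tau> \<subseteq> ran \<sigma>"
  obtains \<mu> where "\<mu> permutes S" "pinv (\<sigma> \<circ>\<^sub>m pmap S a) \<circ>\<^sub>m (\<tau> \<circ>\<^sub>m pmap S a) = pmap S \<mu>"
proof (rule pmap_of_map[OF \<open>finite S\<close>])
  let ?A = "pmap S a" and ?B = "\<sigma> \<circ>\<^sub>m pmap S a"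
  have A: "inj_on ?A (dom ?A)" and ran_A: "ran ?A = dom \<sigma>"
    using a by (auto simp: bij_betw_def intro: inj_on_pmap)
  have B: "inj_on ?B (dom ?B)"
    using inj_on_map_comp[OF \<sigma> A] .
  have dom_B: "dom ?B = S" and ran_B: "ran ?B = ran \<sigma>"
    using dom_ran_map_comp_onto[OF ran_A] by simp_all
  show dom_M: "dom (pinv ?B \<circ>\<^sub>m (\<tau> \<circ>\<^sub>m ?A)) = S"
  proof (intro equalityI subsetI)
    fix i assume "i \<in> dom (pinv ?B \<circ>\<^sub>m (\<tau> \<circ>\<^sub>m ?A))"
    then show "i \<in> S" by (cases "i \<in> S") auto
  next
    fix i assume i: "i \<in> S"
    then have "a i \<in> dom \<tau>" using a dom_\<tau> by (auto simp: bij_betw_def)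
    then obtain y where y: "\<tau> (a i) = Some y" by blast
    then have "y \<in> ran ?B" using ran_\<tau> ran_B by (auto intro: ranI)
    then obtain z where "pinv ?B y = Some z" by (metis domD dom_pinv)
    with i y show "i \<in> dom (pinv ?B \<circ>\<^sub>m (\<tau> \<circ>\<^sub>m ?A))" by auto
  qed
  show "ran (pinv ?B \<circ>\<^sub>m (\<tau> \<circ>\<^sub>m ?A)) \<subseteq> S"
    using ran_map_comp_subset ran_pinv[OF B] dom_B by metis
  show "inj_on (pinv ?B \<circ>\<^sub>m (\<tau> \<circ>\<^sub>m ?A)) S"
    using inj_on_map_comp[OF inj_on_pinv[OF B] inj_on_map_comp[OF \<tau> A]] dom_M by simp
qed

section \<open>The symplectic rook monoid\<close>

lemma theta_in: "i \<in> {1..n} \<Longrightarrow> theta n i \<in> {1..n}"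
  by (auto simp: theta_def)

lemma theta_theta: "i \<in> {1..n} \<Longrightarrow> theta n (theta n i) = i"
  by (auto simp: theta_def)

lemma W_group_subgroup: "subgroup (carrier (W_group n)) (sym_group n)"
proof (rule group.subgroupI[OF sym_group_is_group])
  show "carrier (W_group n) \<subseteq> carrier (sym_group n)"
    by (auto simp: W_group_def sym_group_def)
  show "carrier (W_group n) \<noteq> {}"
    by (auto simp: W_group_def intro!: exI[of _ id])
next
  fix p assume "p \<in> carrier (W_group n)"
  then have p: "p permutes {1..n}" and p_theta: "\<forall>i\<in>{1..n}. p (theta n i) = theta n (p i)"
    by (auto simp: W_group_def)
  have "inv' p (theta n i) = theta n (inv' p i)" if "i \<in> {1..n}" for i
  proof -
    have "inv' p i \<in> {1..n}" using that permutes_in_image[OF permutes_inv[OF p]] by blast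
    then have "p (theta n (inv' p i)) = theta n i"
      using p_theta permutes_inverses(1)[OF p] by metis
    then show ?thesis by (metis p permutes_inverses(2))
  qed
  with p show "inv\<^bsub>sym_group n\<^esub> p \<in> carrier (W_group n)"
    by (simp add: W_group_def sym_group_carrier permutes_inv)
next
  fix p q assume "p \<in> carrier (W_group n)" "q \<in> carrier (W_group n)"
  then show "p \<otimes>\<^bsub>sym_group n\<^esub> q \<in> carrier (W_group n)"
    by (auto simp: W_group_def sym_group_def permutes_compose)
      (metis atLeastAtMost_iff permutes_in_image)
qed

lemma W_group_is_group: "group (W_group n)"
proof -
  have "W_group n = (sym_group n)\<lparr>carrier := carrier (W_group n)\<rparr>"
    by (simp add: W_group_def sym_group_def)
  then show ?thesis
    using subgroup.subgroup_is_group[OF W_group_subgroup[of n] sym_group_is_group] by simp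
qed

locale symplectic_rook =
  fixes m n :: nat
  assumes m_pos: "1 \<le> m" and n_eq: "n = 2 * m"
begin

abbreviation "\<theta> \<equiv> theta n"
abbreviation "pa \<equiv> proper_admissible n"

lemma theta_neq: "x \<in> {1..n} \<Longrightarrow> \<theta> x \<noteq> x"
  using n_eq by (simp add: theta_def) presburger

lemma proper_admissible_iff: "pa I \<longleftrightarrow> I \<subseteq> {1..n} \<and> (\<forall>x\<in>I. \<theta> x \<notin> I)"
proof
  assume "pa I"
  then show "I \<subseteq> {1..n} \<and> (\<forall>x\<in>I. \<theta> x \<notin> I)"
    unfolding proper_admissible_def admissible_def by (auto simp: theta_in)
next
  assume I: "I \<subseteq> {1..n} \<and> (\<forall>x\<in>I. \<theta> x \<notin> I)"
  have "1 \<in> {1..n}" "\<theta> 1 \<in> {1..n}" using n_eq m_pos by (auto simp: theta_def)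
  with I have "I \<noteq> {1..n}" by blast
  moreover have "I \<inter> \<theta> ` I = {}" using I by auto
  ultimately show "pa I"
    using I unfolding proper_admissible_def admissible_def by blast
qed

lemma proper_admissible_subset: "pa I \<Longrightarrow> J \<subseteq> I \<Longrightarrow> pa J"
  unfolding proper_admissible_iff by blast

lemma finite_subset_n: "I \<subseteq> {1..n} \<Longrightarrow> finite I"
  by (rule finite_subset) auto

lemma card_proper_admissible: assumes "pa I" shows "card I \<le> m"
proof -
  have I: "I \<subseteq> {1..n}" "\<forall>x\<in>I. \<theta> x \<notin> I" using assms proper_admissible_iff by auto
  then have "inj_on \<theta> I" by (metis inj_onI subsetD theta_theta)
  moreover have "finite I" using I finite_subset_n by blast
  ultimately have "card (I \<union> \<theta> ` I) = 2 * card I"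
    using I by (subst card_Un_disjoint) (auto simp: card_image)
  moreover have "I \<union> \<theta> ` I \<subseteq> {1..n}" using I theta_in by auto
  then have "card (I \<union> \<theta> ` I) \<le> n" using card_mono[of "{1..n}"] by fastforce
  ultimately show ?thesis using n_eq by simp
qed

lemma proper_admissible_initial: "k \<le> m \<Longrightarrow> pa {1..k}"
  unfolding proper_admissible_iff using n_eq by (auto simp: theta_def)

lemma SR_partial_inj: "\<sigma> \<in> SR n \<Longrightarrow> dom \<sigma> \<subseteq> {1..n} \<and> ran \<sigma> \<subseteq> {1..n} \<and> inj_on \<sigma> (dom \<sigma>)"
  unfolding SR_def partial_inj_def by blast

lemma finite_dom_SR: "\<sigma> \<in> SR n \<Longrightarrow> finite (dom \<sigma>)"
  by (rule finite_subset_n) (use SR_partial_inj in blast)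

lemma rk_inW: "inW n \<sigma> \<Longrightarrow> rk \<sigma> = n"
  by (auto simp: inW_def rk_def)

lemma SR_not_inW:
  assumes "\<sigma> \<in> SR n" "\<not> inW n \<sigma>"
  shows "pa (dom \<sigma>)" "pa (ran \<sigma>)" "rk \<sigma> \<le> m"
proof -
  show dom: "pa (dom \<sigma>)" and "pa (ran \<sigma>)" using assms by (simp_all add: SR_def)
  show "rk \<sigma> \<le> m" using card_proper_admissible[OF dom] by (simp add: rk_def)
qed

lemma inW_iff_rk: "\<sigma> \<in> SR n \<Longrightarrow> inW n \<sigma> \<longleftrightarrow> rk \<sigma> = n"
  by (cases "inW n \<sigma>") (use rk_inW[of \<sigma>] SR_not_inW(3)[of \<sigma>] n_eq m_pos in auto)

lemma rk_SR_le: "\<sigma> \<in> SR n \<Longrightarrow> rk \<sigma> \<le> n"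
  by (cases "inW n \<sigma>") (use rk_inW[of \<sigma>] SR_not_inW(3)[of \<sigma>] n_eq in auto)

lemma rk_SR_less_iff: "\<sigma> \<in> SR n \<Longrightarrow> rk \<sigma> < n \<longleftrightarrow> rk \<sigma> \<le> m"
  by (cases "inW n \<sigma>") (use rk_inW[of \<sigma>] SR_not_inW(3)[of \<sigma>] n_eq m_pos in auto)

lemma inW_if_full_dom: "\<sigma> \<in> SR n \<Longrightarrow> dom \<sigma> = {1..n} \<Longrightarrow> inW n \<sigma>"
  using SR_not_inW(1)[of \<sigma>] by (auto simp: proper_admissible_def)

lemma SR_I: "inj_on \<sigma> (dom \<sigma>) \<Longrightarrow> pa (dom \<sigma>) \<Longrightarrow> pa (ran \<sigma>) \<Longrightarrow> \<sigma> \<in> SR n"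
  unfolding SR_def partial_inj_def using proper_admissible_iff by auto

lemma inW_theta: "inW n \<tau> \<Longrightarrow> \<tau> x = Some y \<Longrightarrow> \<tau> (\<theta> x) = Some (\<theta> y)"
  using domI[of \<tau> x y] by (auto simp: inW_def)

lemma inW_inj: "inW n \<tau> \<Longrightarrow> inj_on \<tau> (dom \<tau>)"
  unfolding inW_def partial_inj_def by blast

lemma proper_admissible_image_inW:
  assumes \<tau>: "inW n \<tau>" and I: "pa I" shows "pa {y. \<exists>x\<in>I. \<tau> x = Some y}"
  unfolding proper_admissible_iff
proof (intro conjI ballI)
  show "{y. \<exists>x\<in>I. \<tau> x = Some y} \<subseteq> {1..n}"
    using \<tau> by (auto simp: inW_def dest: ranI)
next
  fix y assume "y \<in> {y. \<exists>x\<in>I. \<tau> x = Some y}"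
  then obtain x where x: "x \<in> I" "\<tau> x = Some y" by blast
  show "\<theta> y \<notin> {y. \<exists>x\<in>I. \<tau> x = Some y}"
  proof
    assume "\<theta> y \<in> {y. \<exists>x\<in>I. \<tau> x = Some y}"
    then obtain x' where x': "x' \<in> I" "\<tau> x' = Some (\<theta> y)" by blast
    moreover have "\<tau> (\<theta> x) = Some (\<theta> y)" using inW_theta[OF \<tau> x(2)] .
    ultimately have "\<theta> x = x'" using inW_inj[OF \<tau>] by (metis domI inj_onD)
    with x x' I show False unfolding proper_admissible_iff by blast
  qed
qed

lemma proper_admissible_preimage_inW:
  assumes \<tau>: "inW n \<tau>" and I: "pa I" shows "pa {x. \<exists>y\<in>I. \<tau> x = Some y}"
  unfolding proper_admissible_iff
proof (intro conjI ballI)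
  show "{x. \<exists>y\<in>I. \<tau> x = Some y} \<subseteq> {1..n}"
    using \<tau> by (auto simp: inW_def dest: domI)
next
  fix x assume "x \<in> {x. \<exists>y\<in>I. \<tau> x = Some y}"
  then obtain y where y: "y \<in> I" "\<tau> x = Some y" by blast
  then have "\<tau> (\<theta> x) = Some (\<theta> y)" "\<theta> y \<notin> I"
    using inW_theta[OF \<tau>] I by (auto simp: proper_admissible_iff)
  then show "\<theta> x \<notin> {x. \<exists>y\<in>I. \<tau> x = Some y}" by auto
qed

lemma partial_inj_map_comp:
  "partial_inj n \<sigma> \<Longrightarrow> partial_inj n \<tau> \<Longrightarrow> partial_inj n (\<sigma> \<circ>\<^sub>m \<tau>)"
  unfolding partial_inj_def
  using dom_map_comp_subset[of \<sigma> \<tau>] ran_map_comp_subset[of \<sigma> \<tau>] inj_on_map_comp by blast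

lemma inW_map_comp:
  assumes \<sigma>: "inW n \<sigma>" and \<tau>: "inW n \<tau>" shows "inW n (\<sigma> \<circ>\<^sub>m \<tau>)"
proof -
  have "ran \<tau> = dom \<sigma>" using \<sigma> \<tau> by (simp add: inW_def)
  then have "dom (\<sigma> \<circ>\<^sub>m \<tau>) = {1..n}" "ran (\<sigma> \<circ>\<^sub>m \<tau>) = {1..n}"
    using \<sigma> \<tau> by (simp_all add: dom_ran_map_comp_onto inW_def)
  moreover have "(\<sigma> \<circ>\<^sub>m \<tau>) (\<theta> i) = map_option \<theta> ((\<sigma> \<circ>\<^sub>m \<tau>) i)" if "i \<in> {1..n}" for i
  proof -
    from that \<tau> have "i \<in> dom \<tau>" by (simp add: inW_def)
    then obtain y where y: "\<tau> i = Some y" by blast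
    then have "y \<in> {1..n}" using \<tau> ranI[of \<tau> i y] by (simp add: inW_def)
    with \<sigma> y show ?thesis by (simp add: inW_theta[OF \<tau> y] inW_def)
  qed
  ultimately show ?thesis
    using partial_inj_map_comp \<sigma> \<tau> by (simp add: inW_def)
qed

lemma map_comp_SR:
  assumes \<sigma>: "\<sigma> \<in> SR n" and \<tau>: "\<tau> \<in> SR n" shows "\<sigma> \<circ>\<^sub>m \<tau> \<in> SR n"
proof (cases "inW n \<sigma> \<and> inW n \<tau>")
  case True
  then show ?thesis using inW_map_comp by (simp add: SR_def inW_def)
next
  case False
  have "pa (dom (\<sigma> \<circ>\<^sub>m \<tau>))"
  proof (cases "inW n \<tau>")
    case True
    with False have "pa (dom \<sigma>)" using SR_not_inW(1)[OF \<sigma>] by blast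
    with True show ?thesis
      using proper_admissible_preimage_inW by (simp add: dom_map_comp)
  next
    case False
    then show ?thesis
      using proper_admissible_subset[OF SR_not_inW(1)[OF \<tau>] dom_map_comp_subset] by blast
  qed
  moreover have "pa (ran (\<sigma> \<circ>\<^sub>m \<tau>))"
  proof (cases "inW n \<sigma>")
    case True
    with False have "pa (ran \<tau>)" using SR_not_inW(2)[OF \<tau>] by blast
    then have "pa {z. \<exists>y\<in>ran \<tau>. \<sigma> y = Some z}"
      using proper_admissible_image_inW[OF True] by simp
    then show ?thesis by (simp add: ran_map_comp)
  next
    case False
    then show ?thesis
      using proper_admissible_subset[OF SR_not_inW(2)[OF \<sigma>] ran_map_comp_subset] by blast
  qed
  moreover have "inj_on (\<sigma> \<circ>\<^sub>m \<tau>) (dom (\<sigma> \<circ>\<^sub>m \<tau>))"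
    using SR_partial_inj[OF \<sigma>] SR_partial_inj[OF \<tau>] by (simp add: inj_on_map_comp)
  ultimately show ?thesis by (rule SR_I[rotated])
qed

lemma pinv_SR:
  assumes \<sigma>: "\<sigma> \<in> SR n" shows "pinv \<sigma> \<in> SR n"
proof -
  have inj: "inj_on \<sigma> (dom \<sigma>)" using SR_partial_inj[OF \<sigma>] by blast
  have pij: "partial_inj n (pinv \<sigma>)"
    using SR_partial_inj[OF \<sigma>] ran_pinv[OF inj] inj_on_pinv[OF inj] by (simp add: partial_inj_def)
  show ?thesis
  proof (cases "inW n \<sigma>")
    case True
    have "pinv \<sigma> (\<theta> i) = map_option \<theta> (pinv \<sigma> i)" if "i \<in> {1..n}" for i
    proof -
      from that True have "i \<in> ran \<sigma>" by (simp add: inW_def)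
      then obtain x where x: "\<sigma> x = Some i" by (auto simp: ran_def)
      moreover have "\<sigma> (\<theta> x) = Some (\<theta> i)" using inW_theta[OF True x] .
      ultimately have "pinv \<sigma> i = Some x" "pinv \<sigma> (\<theta> i) = Some (\<theta> x)"
        by (simp_all add: pinv_Some_iff[OF inj])
      then show ?thesis by simp
    qed
    with True pij ran_pinv[OF inj] have "inW n (pinv \<sigma>)" by (simp add: inW_def)
    then show ?thesis by (simp add: SR_def inW_def)
  next
    case False
    then show ?thesis
      using SR_not_inW[OF \<sigma>] ran_pinv[OF inj] inj_on_pinv[OF inj] by (simp add: SR_I)
  qed
qed

lemma pmap_SR: "inj_on f S \<Longrightarrow> pa S \<Longrightarrow> pa (f ` S) \<Longrightarrow> pmap S f \<in> SR n"
  by (rule SR_I) (simp_all add: inj_on_pmap)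

lemma empty_SR: "Map.empty \<in> SR n"
  by (rule SR_I) (simp_all add: proper_admissible_iff)

lemma pmap_W_SR:
  assumes "\<mu> \<in> carrier (W_group n)" shows "pmap {1..n} \<mu> \<in> SR n"
proof -
  have \<mu>: "\<mu> permutes {1..n}" and \<mu>_theta: "\<forall>i\<in>{1..n}. \<mu> (\<theta> i) = \<theta> (\<mu> i)"
    using assms by (auto simp: W_group_def)
  have "partial_inj n (pmap {1..n} \<mu>)"
    using inj_on_pmap[OF permutes_inj_on[OF \<mu>]] permutes_image[OF \<mu>] by (simp add: partial_inj_def)
  moreover have "pmap {1..n} \<mu> (\<theta> i) = map_option \<theta> (pmap {1..n} \<mu> i)" if "i \<in> {1..n}" for i
    using that theta_in \<mu>_theta by simp
  ultimately have "inW n (pmap {1..n} \<mu>)"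
    using permutes_image[OF \<mu>] by (simp add: inW_def)
  then show ?thesis by (simp add: SR_def inW_def)
qed

lemma carrier_W_group_eq: "carrier (W_group n) = {\<mu>. \<mu> permutes {1..n} \<and> pmap {1..n} \<mu> \<in> SR n}"
proof (intro equalityI subsetI CollectI conjI)
  fix \<mu> assume "\<mu> \<in> carrier (W_group n)"
  then show "\<mu> permutes {1..n}" "pmap {1..n} \<mu> \<in> SR n"
    using pmap_W_SR by (auto simp: W_group_def)
next
  fix \<mu> assume "\<mu> \<in> {\<mu>. \<mu> permutes {1..n} \<and> pmap {1..n} \<mu> \<in> SR n}"
  then have \<mu>: "\<mu> permutes {1..n}" and W: "inW n (pmap {1..n} \<mu>)"
    using inW_if_full_dom by auto
  have "\<mu> (\<theta> i) = \<theta> (\<mu> i)" if "i \<in> {1..n}" for i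
  proof -
    have "pmap {1..n} \<mu> (\<theta> i) = map_option \<theta> (pmap {1..n} \<mu> i)"
      using W that by (simp add: inW_def)
    with that theta_in[OF that] show ?thesis by simp
  qed
  with \<mu> show "\<mu> \<in> carrier (W_group n)" by (simp add: W_group_def)
qed

lemma carrier_sym_group_eq:
  assumes "k \<le> m" shows "carrier (sym_group k) = {\<mu>. \<mu> permutes {1..k} \<and> pmap {1..k} \<mu> \<in> SR n}"
  using proper_admissible_initial[OF assms]
  by (auto simp: sym_group_carrier permutes_image permutes_inj_on intro: pmap_SR)

lemma id_on_full_SR: "id_on {1..n} \<in> SR n"
  using pmap_W_SR[of id] by (simp add: W_group_def)

lemma SR_right_factor_covering_dom:
  assumes \<sigma>: "\<sigma> \<in> SR n" and \<tau>: "\<tau> \<in> SR n" and rk: "rk \<tau> \<le> rk \<sigma>"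
  obtains \<beta> where "\<beta> \<in> SR n" "dom \<tau> \<subseteq> dom (\<sigma> \<circ>\<^sub>m \<beta>)"
proof (cases "inW n \<sigma>")
  case True
  then have "dom \<tau> \<subseteq> dom (\<sigma> \<circ>\<^sub>m id_on {1..n})"
    using SR_partial_inj[OF \<tau>] by (simp add: map_comp_id_on inW_def)
  with id_on_full_SR show ?thesis by (rule that)
next
  case False
  then have "\<not> inW n \<tau>"
    using rk SR_not_inW(3)[OF \<sigma>] rk_inW[of \<tau>] n_eq m_pos by auto
  obtain f where f: "f ` dom \<tau> \<subseteq> dom \<sigma>" "inj_on f (dom \<tau>)"
    using card_le_inj[OF finite_dom_SR[OF \<tau>] finite_dom_SR[OF \<sigma>]] rk by (auto simp: rk_def)
  have "pmap (dom \<tau>) f \<in> SR n"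
    using f SR_not_inW(1)[OF \<tau> \<open>\<not> inW n \<tau>\<close>] proper_admissible_subset[OF SR_not_inW(1)[OF \<sigma> False]]
    by (intro pmap_SR) auto
  moreover have "dom \<tau> \<subseteq> dom (\<sigma> \<circ>\<^sub>m pmap (dom \<tau>) f)"
  proof
    fix x assume x: "x \<in> dom \<tau>"
    with f have "f x \<in> dom \<sigma>" by blast
    moreover from x have "pmap (dom \<tau>) f x = Some (f x)" by (rule pmap_in)
    ultimately show "x \<in> dom (\<sigma> \<circ>\<^sub>m pmap (dom \<tau>) f)" by auto
  qed
  ultimately show ?thesis by (rule that)
qed

lemma SR_factor_rk_le:
  assumes \<sigma>: "\<sigma> \<in> SR n" and \<tau>: "\<tau> \<in> SR n" and rk: "rk \<tau> \<le> rk \<sigma>"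
  obtains \<alpha> \<beta> where "\<alpha> \<in> SR n" "\<beta> \<in> SR n" "\<tau> = \<alpha> \<circ>\<^sub>m \<sigma> \<circ>\<^sub>m \<beta>"
proof -
  obtain \<beta> where \<beta>: "\<beta> \<in> SR n" and dom_\<tau>: "dom \<tau> \<subseteq> dom (\<sigma> \<circ>\<^sub>m \<beta>)"
    using SR_right_factor_covering_dom[OF assms] .
  define \<gamma> where "\<gamma> = \<sigma> \<circ>\<^sub>m \<beta>"
  have \<gamma>: "\<gamma> \<in> SR n" "inj_on \<gamma> (dom \<gamma>)"
    unfolding \<gamma>_def using map_comp_SR[OF \<sigma> \<beta>] SR_partial_inj by blast+
  have "\<tau> \<circ>\<^sub>m pinv \<gamma> \<circ>\<^sub>m \<sigma> \<circ>\<^sub>m \<beta> = \<tau> \<circ>\<^sub>m (pinv \<gamma> \<circ>\<^sub>m \<gamma>)"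
    by (simp add: \<gamma>_def map_comp_assoc)
  also have "\<dots> = \<tau> \<circ>\<^sub>m id_on (dom \<gamma>)"
    by (simp add: pinv_map_comp_self[OF \<gamma>(2)])
  also have "\<dots> = \<tau>"
    using dom_\<tau> by (simp add: map_comp_id_on restrict_map_dom_subset \<gamma>_def)
  finally show ?thesis
    using that \<beta> map_comp_SR[OF \<tau> pinv_SR[OF \<gamma>(1)]] by (metis map_comp_assoc)
qed

definition max_admissible :: "nat \<Rightarrow> nat \<Rightarrow> nat set" where
  "max_admissible x z = {i \<in> {1..n}. if i = x \<or> i = \<theta> x then i = x
     else if i = z \<or> i = \<theta> z then i = \<theta> z else i \<le> m}"

lemma max_admissible_subset: "max_admissible x z \<subseteq> {1..n}"
  unfolding max_admissible_def by blast

lemma mem_max_admissible: "x \<in> {1..n} \<Longrightarrow> x \<in> max_admissible x z"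
  by (simp add: max_admissible_def)

lemma not_mem_max_admissible: "z \<in> {1..n} \<Longrightarrow> z \<noteq> x \<Longrightarrow> z \<notin> max_admissible x z"
  using theta_neq[of z] by (simp add: max_admissible_def)

lemma theta_mem_max_admissible_iff:
  assumes i: "i \<in> {1..n}" and x: "x \<in> {1..n}" and z: "z \<in> {1..n}"
  shows "\<theta> i \<in> max_admissible x z \<longleftrightarrow> i \<notin> max_admissible x z"
proof -
  have mem: "j \<in> max_admissible x z \<longleftrightarrow> (if j = x \<or> j = \<theta> x then j = x
      else if j = z \<or> j = \<theta> z then j = \<theta> z else j \<le> m)" if "j \<in> {1..n}" for j
    using that by (simp add: max_admissible_def)
  have "\<theta> i = x \<longleftrightarrow> i = \<theta> x" "\<theta> i = \<theta> x \<longleftrightarrow> i = x"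
    "\<theta> i = z \<longleftrightarrow> i = \<theta> z" "\<theta> i = \<theta> z \<longleftrightarrow> i = z"
    using i x z theta_theta by metis+
  moreover have "x \<noteq> \<theta> x" "z \<noteq> \<theta> z" using theta_neq x z by metis+
  moreover have "\<theta> i \<le> m \<longleftrightarrow> \<not> i \<le> m" using i n_eq by (simp add: theta_def) linarith
  ultimately show ?thesis
    unfolding mem[OF theta_in[OF i]] mem[OF i] by auto
qed

lemma max_admissible_proper_admissible:
  assumes "x \<in> {1..n}" "z \<in> {1..n}" shows "pa (max_admissible x z)"
  unfolding proper_admissible_iff
proof (intro conjI ballI max_admissible_subset)
  fix i assume "i \<in> max_admissible x z"
  moreover from this have "i \<in> {1..n}" using max_admissible_subset by blast
  ultimately show "\<theta> i \<notin> max_admissible x z"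
    using theta_mem_max_admissible_iff[OF _ assms] by blast
qed

lemma card_max_admissible:
  assumes "x \<in> {1..n}" "z \<in> {1..n}" shows "card (max_admissible x z) = m"
proof -
  let ?E = "max_admissible x z"
  have "\<theta> ` ?E = {1..n} - ?E"
  proof
    show "\<theta> ` ?E \<subseteq> {1..n} - ?E"
      using max_admissible_subset theta_in theta_mem_max_admissible_iff[OF _ assms] by blast
    show "{1..n} - ?E \<subseteq> \<theta> ` ?E"
    proof
      fix i assume i: "i \<in> {1..n} - ?E"
      then have "\<theta> i \<in> ?E" using theta_mem_max_admissible_iff[OF _ assms] by blast
      moreover have "i = \<theta> (\<theta> i)" using i theta_theta by simp
      ultimately show "i \<in> \<theta> ` ?E" by (rule image_eqI[rotated])
    qed
  qed
  moreover have "inj_on \<theta> ?E"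
    by (rule inj_onI) (metis max_admissible_subset subsetD theta_theta)
  ultimately have "card ({1..n} - ?E) = card ?E" by (metis card_image)
  moreover have "card ({1..n} - ?E) = n - card ?E"
    using max_admissible_subset by (simp add: card_Diff_subset finite_subset_n)
  moreover have "card ?E \<le> n" using card_mono[OF _ max_admissible_subset] by simp
  ultimately show ?thesis using n_eq by arith
qed

lemma id_on_SR: "pa E \<Longrightarrow> id_on E \<in> SR n"
  by (rule pmap_SR) simp_all

lemma rk_eq_card_ran: "\<sigma> \<in> SR n \<Longrightarrow> rk \<sigma> = card (ran \<sigma>)"
  using SR_partial_inj[of \<sigma>] card_ran_eq_card_dom[of \<sigma>] by (simp add: rk_def)

end

section \<open>Congruences\<close>

lemma (in group) normal_of_compatible_equiv:
  assumes equiv: "equiv (carrier G) R"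
    and left: "\<And>x a b. x \<in> carrier G \<Longrightarrow> (a, b) \<in> R \<Longrightarrow> (x \<otimes> a, x \<otimes> b) \<in> R"
    and right: "\<And>x a b. x \<in> carrier G \<Longrightarrow> (a, b) \<in> R \<Longrightarrow> (a \<otimes> x, b \<otimes> x) \<in> R"
  shows "{h \<in> carrier G. (\<one>, h) \<in> R} \<lhd> G"
proof -
  let ?H = "{h \<in> carrier G. (\<one>, h) \<in> R}"
  have refl: "\<And>a. a \<in> carrier G \<Longrightarrow> (a, a) \<in> R"
    and sym: "\<And>a b. (a, b) \<in> R \<Longrightarrow> (b, a) \<in> R"
    and trans: "\<And>a b c. (a, b) \<in> R \<Longrightarrow> (b, c) \<in> R \<Longrightarrow> (a, c) \<in> R"
    using equiv unfolding equiv_def refl_on_def sym_def trans_def by blast+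
  have "subgroup ?H G"
  proof (rule subgroupI)
    show "?H \<noteq> {}" using refl by blast
  next
    fix a assume a: "a \<in> ?H"
    then have "(inv a \<otimes> \<one>, inv a \<otimes> a) \<in> R" by (intro left) auto
    with a show "inv a \<in> ?H" by (auto intro: sym)
  next
    fix a b assume a: "a \<in> ?H" and b: "b \<in> ?H"
    then have "(a \<otimes> \<one>, a \<otimes> b) \<in> R" by (intro left) auto
    with a b show "a \<otimes> b \<in> ?H" by (auto intro: trans)
  qed auto
  moreover have "x \<otimes> h \<otimes> inv x \<in> ?H" if x: "x \<in> carrier G" and h: "h \<in> ?H" for x h
  proof -
    have "(x \<otimes> \<one> \<otimes> inv x, x \<otimes> h \<otimes> inv x) \<in> R"
      using x h by (intro left right) auto
    with x h show ?thesis by auto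
  qed
  ultimately show ?thesis by (auto simp: normal_inv_iff)
qed

locale SR_congruence = symplectic_rook +
  fixes \<rho> :: "((nat \<rightharpoonup> nat) \<times> (nat \<rightharpoonup> nat)) set"
  assumes congruence: "is_congruence n \<rho>"
begin

lemma cong_equiv: "equiv (SR n) \<rho>"
  using congruence by (simp add: is_congruence_def)

lemma cong_SR: "(\<sigma>, \<tau>) \<in> \<rho> \<Longrightarrow> \<sigma> \<in> SR n \<and> \<tau> \<in> SR n"
  using equiv_type[OF cong_equiv] by blast

lemma cong_refl: "\<sigma> \<in> SR n \<Longrightarrow> (\<sigma>, \<sigma>) \<in> \<rho>"
  using cong_equiv by (simp add: equiv_def refl_on_def)

lemma cong_sym: "(\<sigma>, \<tau>) \<in> \<rho> \<Longrightarrow> (\<tau>, \<sigma>) \<in> \<rho>"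
  using cong_equiv by (meson equiv_def symD)

lemma cong_trans: "(\<sigma>, \<tau>) \<in> \<rho> \<Longrightarrow> (\<tau>, \<xi>) \<in> \<rho> \<Longrightarrow> (\<sigma>, \<xi>) \<in> \<rho>"
  using cong_equiv by (meson equiv_def transD)

lemma cong_mult_left: "(\<sigma>, \<tau>) \<in> \<rho> \<Longrightarrow> \<alpha> \<in> SR n \<Longrightarrow> (\<alpha> \<circ>\<^sub>m \<sigma>, \<alpha> \<circ>\<^sub>m \<tau>) \<in> \<rho>"
  and cong_mult_right: "(\<sigma>, \<tau>) \<in> \<rho> \<Longrightarrow> \<beta> \<in> SR n \<Longrightarrow> (\<sigma> \<circ>\<^sub>m \<beta>, \<tau> \<circ>\<^sub>m \<beta>) \<in> \<rho>"
  using congruence unfolding is_congruence_def by blast+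

definition zero_class :: "(nat \<rightharpoonup> nat) set" where
  "zero_class = {\<sigma>. (\<sigma>, Map.empty) \<in> \<rho>}"

lemma zero_class_SR: "\<sigma> \<in> zero_class \<Longrightarrow> \<sigma> \<in> SR n"
  using cong_SR by (auto simp: zero_class_def)

lemma empty_mem_zero_class: "Map.empty \<in> zero_class"
  using cong_refl[OF empty_SR] by (simp add: zero_class_def)

lemma cong_zero_class_iff: "(\<sigma>, \<tau>) \<in> \<rho> \<Longrightarrow> \<sigma> \<in> zero_class \<longleftrightarrow> \<tau> \<in> zero_class"
  unfolding zero_class_def using cong_sym cong_trans by blast

lemma cong_if_zero_class: "\<sigma> \<in> zero_class \<Longrightarrow> \<tau> \<in> zero_class \<Longrightarrow> (\<sigma>, \<tau>) \<in> \<rho>"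
  unfolding zero_class_def using cong_sym cong_trans by blast

lemma zero_class_downward_closed:
  assumes \<sigma>: "\<sigma> \<in> zero_class" and \<tau>: "\<tau> \<in> SR n" and rk: "rk \<tau> \<le> rk \<sigma>"
  shows "\<tau> \<in> zero_class"
proof -
  obtain \<alpha> \<beta> where "\<alpha> \<in> SR n" "\<beta> \<in> SR n" and \<tau>_eq: "\<tau> = \<alpha> \<circ>\<^sub>m \<sigma> \<circ>\<^sub>m \<beta>"
    using SR_factor_rk_le[OF zero_class_SR[OF \<sigma>] \<tau> rk] .
  then have "(\<alpha> \<circ>\<^sub>m \<sigma> \<circ>\<^sub>m \<beta>, \<alpha> \<circ>\<^sub>m Map.empty \<circ>\<^sub>m \<beta>) \<in> \<rho>"
    using \<sigma> by (intro cong_mult_left cong_mult_right) (simp_all add: zero_class_def)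
  then show ?thesis by (simp add: zero_class_def \<tau>_eq)
qed

definition zero_rank :: nat where
  "zero_rank = Max (rk ` zero_class)"

lemma finite_rk_zero_class: "finite (rk ` zero_class)"
proof (rule finite_subset)
  show "rk ` zero_class \<subseteq> {0..n}" using zero_class_SR rk_SR_le by auto
qed simp

lemma zero_rank_attained:
  obtains \<xi> where "\<xi> \<in> zero_class" "rk \<xi> = zero_rank"
proof -
  have "zero_rank \<in> rk ` zero_class"
    unfolding zero_rank_def using finite_rk_zero_class empty_mem_zero_class by (intro Max_in) auto
  then show ?thesis using that by (metis imageE)
qed

lemma zero_class_iff_rk_le: "\<sigma> \<in> SR n \<Longrightarrow> \<sigma> \<in> zero_class \<longleftrightarrow> rk \<sigma> \<le> zero_rank"
  using finite_rk_zero_class zero_class_downward_closed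
  by (metis Max_ge image_eqI zero_rank_attained zero_rank_def)

lemma cong_below_zero_rank:
  assumes "\<sigma> \<in> SR n" "\<tau> \<in> SR n" "rk \<sigma> \<le> zero_rank"
  shows "(\<sigma>, \<tau>) \<in> \<rho> \<longleftrightarrow> rk \<tau> \<le> zero_rank"
  using assms cong_zero_class_iff cong_if_zero_class zero_class_iff_rk_le by blast

lemma zero_rank_le_m:
  assumes nonuniform: "\<rho> \<noteq> SR n \<times> SR n" shows "zero_rank \<le> m"
proof (rule ccontr)
  assume "\<not> zero_rank \<le> m"
  moreover obtain \<xi> where \<xi>: "\<xi> \<in> zero_class" "rk \<xi> = zero_rank" by (rule zero_rank_attained)
  ultimately have "inW n \<xi>" using SR_not_inW(3)[OF zero_class_SR] by fastforce
  with \<xi> have "zero_rank = n" using rk_inW by simp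
  then have "SR n \<subseteq> zero_class" using rk_SR_le zero_class_iff_rk_le by auto
  then have "SR n \<times> SR n \<subseteq> \<rho>" using cong_if_zero_class by auto
  with nonuniform show False using cong_SR by auto
qed

lemma card_le_zero_rank_if_rank_drops:
  assumes D: "pa D" "x \<in> D"
    and drop: "\<And>E. E \<subseteq> D \<Longrightarrow> x \<in> E \<Longrightarrow> \<exists>\<sigma> \<tau>. (\<sigma>, \<tau>) \<in> \<rho> \<and> rk \<sigma> = card E \<and> rk \<tau> < card E"
  shows "card D \<le> zero_rank"
proof (rule ccontr)
  assume "\<not> card D \<le> zero_rank"
  moreover have "finite D" using D(1) finite_subset_n proper_admissible_iff by blast
  ultimately have "zero_rank \<le> card (D - {x})" using D(2) by simp
  then obtain T where T: "T \<subseteq> D - {x}" "card T = zero_rank" "finite T"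
    by (meson obtain_subset_with_card_n)
  moreover from T have "x \<notin> T" by blast
  ultimately have E: "insert x T \<subseteq> D" "card (insert x T) = Suc zero_rank" using D(2) by auto
  then obtain \<sigma> \<tau> where \<sigma>\<tau>: "(\<sigma>, \<tau>) \<in> \<rho>" "rk \<sigma> = Suc zero_rank" "rk \<tau> < Suc zero_rank"
    using drop[of "insert x T"] by auto
  then have "\<tau> \<in> zero_class" using cong_SR zero_class_iff_rk_le by simp
  then have "\<sigma> \<in> zero_class" using cong_zero_class_iff[OF \<sigma>\<tau>(1)] by simp
  with \<sigma>\<tau> show False using cong_SR zero_class_iff_rk_le by fastforce
qed

text \<open>For \<open>\<sigma> \<in> W\<close> the domain \<open>{1..n}\<close> is not admissible, so the climb only reaches a
  maximal admissible set, of size \<open>m\<close>; one concludes through \<open>\<tau>\<close>, which lies outside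
  \<open>W\<close> and hence has rank at most \<open>m\<close>.\<close>

lemma zero_class_if_rank_drops:
  assumes st: "(\<sigma>, \<tau>) \<in> \<rho>" and x: "x \<in> X" and X: "X \<subseteq> {1..n}"
    and not_W: "\<not> inW n \<sigma> \<Longrightarrow> pa X \<and> card X = rk \<sigma>"
    and W: "inW n \<sigma> \<Longrightarrow> X = {1..n} \<and> \<not> inW n \<tau>"
    and drop: "\<And>E. pa E \<Longrightarrow> E \<subseteq> X \<Longrightarrow> x \<in> E \<Longrightarrow>
      \<exists>\<sigma>' \<tau>'. (\<sigma>', \<tau>') \<in> \<rho> \<and> rk \<sigma>' = card E \<and> rk \<tau>' < card E"
  shows "\<sigma> \<in> zero_class"
proof -
  have \<sigma>: "\<sigma> \<in> SR n" and \<tau>: "\<tau> \<in> SR n" using cong_SR[OF st] by auto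
  have x_n: "x \<in> {1..n}" using x X by blast
  define D where "D = (if inW n \<sigma> then max_admissible x x else X)"
  have D: "pa D" "x \<in> D" "D \<subseteq> X"
    using max_admissible_proper_admissible[OF x_n x_n] mem_max_admissible[OF x_n]
      max_admissible_subset not_W W x by (auto simp: D_def)
  have "card D \<le> zero_rank"
    using D proper_admissible_subset by (intro card_le_zero_rank_if_rank_drops[OF D(1,2)] drop) auto
  show ?thesis
  proof (cases "inW n \<sigma>")
    case True
    then have "rk \<tau> \<le> zero_rank"
      using SR_not_inW(3)[OF \<tau>] W \<open>card D \<le> zero_rank\<close> card_max_admissible[OF x_n x_n]
      by (simp add: D_def)
    then show ?thesis using cong_zero_class_iff[OF st] zero_class_iff_rk_le[OF \<tau>] by simp
  next
    case False
    then show ?thesis using \<open>card D \<le> zero_rank\<close> zero_class_iff_rk_le[OF \<sigma>] not_W by (simp add: D_def)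
  qed
qed

lemma zero_class_if_dom_differs:
  assumes st: "(\<sigma>, \<tau>) \<in> \<rho>" and x: "x \<in> dom \<sigma>" "x \<notin> dom \<tau>"
  shows "\<sigma> \<in> zero_class"
proof (rule zero_class_if_rank_drops[OF st x(1)])
  have \<sigma>: "\<sigma> \<in> SR n" using cong_SR[OF st] by auto
  show "dom \<sigma> \<subseteq> {1..n}" using SR_partial_inj[OF \<sigma>] by blast
  show "pa (dom \<sigma>) \<and> card (dom \<sigma>) = rk \<sigma>" if "\<not> inW n \<sigma>"
    using SR_not_inW(1)[OF \<sigma> that] by (simp add: rk_def)
  show "dom \<sigma> = {1..n} \<and> \<not> inW n \<tau>" if "inW n \<sigma>"
    using that x by (auto simp: inW_def)
  fix E assume E: "pa E" "E \<subseteq> dom \<sigma>" "x \<in> E"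
  then have "(\<sigma> |` E, \<tau> |` E) \<in> \<rho>"
    using cong_mult_right[OF st id_on_SR] by (simp add: map_comp_id_on)
  moreover have "rk (\<sigma> |` E) = card E" using E by (simp add: rk_def Int_absorb1)
  moreover have "rk (\<tau> |` E) < card E"
    using E x finite_subset_n proper_admissible_iff by (auto simp: rk_def intro!: psubset_card_mono)
  ultimately show "\<exists>\<sigma>' \<tau>'. (\<sigma>', \<tau>') \<in> \<rho> \<and> rk \<sigma>' = card E \<and> rk \<tau>' < card E" by blast
qed

lemma zero_class_if_ran_differs:
  assumes st: "(\<sigma>, \<tau>) \<in> \<rho>" and x: "x \<in> ran \<sigma>" "x \<notin> ran \<tau>"
  shows "\<sigma> \<in> zero_class"
proof (rule zero_class_if_rank_drops[OF st x(1)])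
  have \<sigma>: "\<sigma> \<in> SR n" and \<tau>: "\<tau> \<in> SR n" using cong_SR[OF st] by auto
  show "ran \<sigma> \<subseteq> {1..n}" using SR_partial_inj[OF \<sigma>] by blast
  show "pa (ran \<sigma>) \<and> card (ran \<sigma>) = rk \<sigma>" if "\<not> inW n \<sigma>"
    using SR_not_inW(2)[OF \<sigma> that] rk_eq_card_ran[OF \<sigma>] by simp
  show "ran \<sigma> = {1..n} \<and> \<not> inW n \<tau>" if "inW n \<sigma>"
    using that x by (auto simp: inW_def)
  fix E assume E: "pa E" "E \<subseteq> ran \<sigma>" "x \<in> E"
  then have E_SR: "id_on E \<in> SR n" by (simp add: id_on_SR)
  have "(id_on E \<circ>\<^sub>m \<sigma>, id_on E \<circ>\<^sub>m \<tau>) \<in> \<rho>" using cong_mult_left[OF st E_SR] .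
  moreover have "rk (id_on E \<circ>\<^sub>m \<sigma>) = card E"
    using rk_eq_card_ran[OF map_comp_SR[OF E_SR \<sigma>]] E by (simp add: ran_id_on_map_comp Int_absorb2)
  moreover have "rk (id_on E \<circ>\<^sub>m \<tau>) < card E"
    using rk_eq_card_ran[OF map_comp_SR[OF E_SR \<tau>]] E x finite_subset_n proper_admissible_iff
    by (auto simp: ran_id_on_map_comp intro!: psubset_card_mono)
  ultimately show "\<exists>\<sigma>' \<tau>'. (\<sigma>', \<tau>') \<in> \<rho> \<and> rk \<sigma>' = card E \<and> rk \<tau>' < card E" by blast
qed

lemma zero_class_if_not_H_rel:
  assumes st: "(\<sigma>, \<tau>) \<in> \<rho>" and not_H: "\<not> H_rel \<sigma> \<tau>"
  shows "\<sigma> \<in> zero_class"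
proof -
  have ts: "(\<tau>, \<sigma>) \<in> \<rho>" using cong_sym[OF st] .
  from not_H consider
      x where "x \<in> dom \<sigma>" "x \<notin> dom \<tau>" | x where "x \<in> dom \<tau>" "x \<notin> dom \<sigma>"
    | x where "x \<in> ran \<sigma>" "x \<notin> ran \<tau>" | x where "x \<in> ran \<tau>" "x \<notin> ran \<sigma>"
    unfolding H_rel_def by blast
  then show ?thesis
    by cases (use zero_class_if_dom_differs zero_class_if_ran_differs st ts cong_zero_class_iff in blast)+
qed

lemma restrict_zero_class_if_separated:
  assumes st: "(\<sigma>, \<tau>) \<in> \<rho>" and E: "pa E"
    and x: "x \<in> E" "\<sigma> x = Some y" and z: "z \<notin> E" "\<tau> z = Some y"
  shows "\<sigma> |` E \<in> zero_class"
proof (rule zero_class_if_not_H_rel)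
  show "(\<sigma> |` E, \<tau> |` E) \<in> \<rho>"
    using cong_mult_right[OF st id_on_SR[OF E]] by (simp add: map_comp_id_on)
  have "y \<in> ran (\<sigma> |` E)" using x by (metis ranI restrict_in)
  moreover have "y \<notin> ran (\<tau> |` E)"
  proof
    assume "y \<in> ran (\<tau> |` E)"
    then obtain e where "e \<in> E" "\<tau> e = Some y" by (auto dest: ran_restrictD)
    moreover have "inj_on \<tau> (dom \<tau>)" using SR_partial_inj cong_SR[OF st] by blast
    ultimately have "e = z" using z(2) by (metis domI inj_onD)
    with \<open>e \<in> E\<close> z(1) show False by simp
  qed
  ultimately show "\<not> H_rel (\<sigma> |` E) (\<tau> |` E)" by (auto simp: H_rel_def)
qed

lemma differing_point:
  assumes "\<sigma> \<noteq> \<tau>" "H_rel \<sigma> \<tau>"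
  obtains x where "x \<in> dom \<sigma>" "\<sigma> x \<noteq> \<tau> x"
proof -
  obtain x where x: "\<sigma> x \<noteq> \<tau> x" using assms(1) by (auto simp: fun_eq_iff)
  moreover have "x \<in> dom \<sigma>" using x assms(2) unfolding H_rel_def by (metis domIff)
  ultimately show ?thesis using that by blast
qed

lemma m_le_zero_rank_if_cong_inW:
  assumes st: "(\<sigma>, \<tau>) \<in> \<rho>" and ne: "\<sigma> \<noteq> \<tau>" and H: "H_rel \<sigma> \<tau>" and W: "inW n \<sigma>"
  shows "m \<le> zero_rank"
proof -
  have \<sigma>: "\<sigma> \<in> SR n" and \<tau>: "\<tau> \<in> SR n" using cong_SR[OF st] by auto
  have dom_\<sigma>: "dom \<sigma> = {1..n}" and ran: "ran \<sigma> = {1..n}" "ran \<tau> = {1..n}"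
    using W H by (auto simp: inW_def H_rel_def)
  obtain x where x: "x \<in> dom \<sigma>" "\<sigma> x \<noteq> \<tau> x" using differing_point[OF ne H] .
  then obtain y where y: "\<sigma> x = Some y" by blast
  then have "y \<in> ran \<tau>" using ran by (auto intro: ranI)
  then obtain z where z: "\<tau> z = Some y" by (auto simp: ran_def)
  have "z \<in> {1..n}" "z \<noteq> x" using z x y SR_partial_inj[OF \<tau>] by (auto dest: domI)
  moreover have x_n: "x \<in> {1..n}" using x dom_\<sigma> by simp
  ultimately have "\<sigma> |` max_admissible x z \<in> zero_class"
    using max_admissible_proper_admissible mem_max_admissible not_mem_max_admissible y z
    by (intro restrict_zero_class_if_separated[OF st]) auto
  moreover have "rk (\<sigma> |` max_admissible x z) = m"
    using card_max_admissible[OF x_n \<open>z \<in> {1..n}\<close>] max_admissible_subset dom_\<sigma>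
    by (simp add: rk_def Int_absorb1)
  ultimately show ?thesis
    using zero_class_iff_rk_le zero_class_SR by fastforce
qed

lemma rk_le_Suc_zero_rank_if_cong:
  assumes st: "(\<sigma>, \<tau>) \<in> \<rho>" and ne: "\<sigma> \<noteq> \<tau>" and H: "H_rel \<sigma> \<tau>" and not_W: "\<not> inW n \<sigma>"
  shows "rk \<sigma> \<le> Suc zero_rank"
proof -
  have \<sigma>: "\<sigma> \<in> SR n" using cong_SR[OF st] by auto
  obtain x where x: "x \<in> dom \<sigma>" "\<sigma> x \<noteq> \<tau> x" using differing_point[OF ne H] .
  then obtain y where y: "\<tau> x = Some y" using H by (auto simp: H_rel_def)
  then have "y \<in> ran \<sigma>" using H by (auto simp: H_rel_def intro: ranI)
  then obtain x' where x': "\<sigma> x' = Some y" by (auto simp: ran_def)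
  have "x' \<noteq> x" using x x' y by auto
  then have "\<sigma> |` (dom \<sigma> - {x}) \<in> zero_class"
    using proper_admissible_subset[OF SR_not_inW(1)[OF \<sigma> not_W]] x' y
    by (intro restrict_zero_class_if_separated[OF st]) auto
  moreover have "rk (\<sigma> |` (dom \<sigma> - {x})) = rk \<sigma> - 1"
    using x finite_dom_SR[OF \<sigma>] by (simp add: rk_def Int_absorb1)
  ultimately show ?thesis
    using zero_class_iff_rk_le zero_class_SR by fastforce
qed

lemma cong_eq_if_rk_gt:
  assumes st: "(\<sigma>, \<tau>) \<in> \<rho>" and zero_rank: "zero_rank < m" and rk: "Suc zero_rank < rk \<sigma>"
  shows "\<sigma> = \<tau>"
proof (rule ccontr)
  assume ne: "\<sigma> \<noteq> \<tau>"
  have "\<sigma> \<notin> zero_class" using rk zero_class_iff_rk_le cong_SR[OF st] by auto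
  then have H: "H_rel \<sigma> \<tau>" using zero_class_if_not_H_rel[OF st] by blast
  show False
    using m_le_zero_rank_if_cong_inW[OF st ne H] rk_le_Suc_zero_rank_if_cong[OF st ne H]
      zero_rank rk by (cases "inW n \<sigma>") auto
qed

definition cong_subgroup :: "nat set \<Rightarrow> (nat \<Rightarrow> nat) monoid \<Rightarrow> (nat \<Rightarrow> nat) set" where
  "cong_subgroup S G = {\<mu> \<in> carrier G. (id_on S, pmap S \<mu>) \<in> \<rho>}"

lemma cong_subgroup_normal:
  fixes G :: "(nat \<Rightarrow> nat) monoid" (structure)
  assumes G: "group G" "mult G = (\<circ>)" "one G = id"
    and carrier: "carrier G = {\<mu>. \<mu> permutes S \<and> pmap S \<mu> \<in> SR n}"
  shows "cong_subgroup S G \<lhd> G"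
proof -
  interpret group G by (rule G(1))
  define R where "R = {(\<mu>, \<nu>). \<mu> \<in> carrier G \<and> \<nu> \<in> carrier G \<and> (pmap S \<mu>, pmap S \<nu>) \<in> \<rho>}"
  have pmap_mult: "pmap S (\<mu> \<otimes> \<nu>) = pmap S \<mu> \<circ>\<^sub>m pmap S \<nu>" if "\<nu> \<in> carrier G" for \<mu> \<nu>
    using that carrier G(2) by (simp add: pmap_map_comp permutes_image)
  have "equiv (carrier G) R"
    by (rule equivI) (auto simp: R_def refl_on_def sym_def trans_def carrier
        intro: cong_refl cong_sym cong_trans)
  moreover have "(x \<otimes> a, x \<otimes> b) \<in> R" "(a \<otimes> x, b \<otimes> x) \<in> R"
    if x: "x \<in> carrier G" and ab: "(a, b) \<in> R" for x a b
  proof -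
    have "pmap S x \<in> SR n" using x carrier by simp
    with ab have "(pmap S x \<circ>\<^sub>m pmap S a, pmap S x \<circ>\<^sub>m pmap S b) \<in> \<rho>"
      "(pmap S a \<circ>\<^sub>m pmap S x, pmap S b \<circ>\<^sub>m pmap S x) \<in> \<rho>"
      by (simp_all add: R_def cong_mult_left cong_mult_right)
    with x ab show "(x \<otimes> a, x \<otimes> b) \<in> R" "(a \<otimes> x, b \<otimes> x) \<in> R"
      by (auto simp: R_def pmap_mult)
  qed
  ultimately have "{h \<in> carrier G. (\<one>, h) \<in> R} \<lhd> G" by (rule normal_of_compatible_equiv)
  moreover have "{h \<in> carrier G. (\<one>, h) \<in> R} = cong_subgroup S G"
    using G(3) one_closed by (auto simp: R_def cong_subgroup_def)
  ultimately show ?thesis by simp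
qed

lemma cong_iff_transported:
  assumes \<sigma>: "\<sigma> \<in> SR n" and \<tau>: "\<tau> \<in> SR n" and H: "H_rel \<sigma> \<tau>"
    and A: "A \<in> SR n" and ran_A: "ran A = dom \<sigma>"
  shows "(\<sigma>, \<tau>) \<in> \<rho> \<longleftrightarrow> (id_on (dom A), pinv (\<sigma> \<circ>\<^sub>m A) \<circ>\<^sub>m (\<tau> \<circ>\<^sub>m A)) \<in> \<rho>"
proof -
  let ?B = "\<sigma> \<circ>\<^sub>m A"
  have dom_\<tau>: "dom \<tau> = dom \<sigma>" and ran_\<tau>: "ran \<tau> \<subseteq> ran \<sigma>" using H by (auto simp: H_rel_def)
  have inj_A: "inj_on A (dom A)" and inj_\<sigma>: "inj_on \<sigma> (dom \<sigma>)" using SR_partial_inj A \<sigma> by blast+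
  note ids = transport_identities[OF inj_A inj_\<sigma> ran_A dom_\<tau> ran_\<tau>]
  have B: "?B \<in> SR n" using map_comp_SR[OF \<sigma> A] .
  show ?thesis
  proof
    assume "(\<sigma>, \<tau>) \<in> \<rho>"
    then have "(pinv ?B \<circ>\<^sub>m ?B, pinv ?B \<circ>\<^sub>m (\<tau> \<circ>\<^sub>m A)) \<in> \<rho>"
      using A B by (intro cong_mult_left cong_mult_right pinv_SR)
    then show "(id_on (dom A), pinv ?B \<circ>\<^sub>m (\<tau> \<circ>\<^sub>m A)) \<in> \<rho>" using ids(1) by simp
  next
    assume "(id_on (dom A), pinv ?B \<circ>\<^sub>m (\<tau> \<circ>\<^sub>m A)) \<in> \<rho>"
    then have "(?B \<circ>\<^sub>m id_on (dom A) \<circ>\<^sub>m pinv A, ?B \<circ>\<^sub>m (pinv ?B \<circ>\<^sub>m (\<tau> \<circ>\<^sub>m A)) \<circ>\<^sub>m pinv A) \<in> \<rho>"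
      using A B by (intro cong_mult_left cong_mult_right pinv_SR)
    then show "(\<sigma>, \<tau>) \<in> \<rho>" using ids(2-4) by simp
  qed
qed

lemma cong_iff_cong_subgroup:
  assumes carrier: "carrier G = {\<mu>. \<mu> permutes S \<and> pmap S \<mu> \<in> SR n}"
    and \<sigma>: "\<sigma> \<in> SR n" and \<tau>: "\<tau> \<in> SR n" and H: "H_rel \<sigma> \<tau>"
    and a: "bij_betw a S (dom \<sigma>)" and A: "pmap S a \<in> SR n"
  shows "(\<sigma>, \<tau>) \<in> \<rho> \<longleftrightarrow> (\<exists>\<mu>\<in>cong_subgroup S G. \<forall>i\<in>S. \<tau> (a i) = \<sigma> (a (\<mu> i)))"
proof -
  let ?M = "pinv (\<sigma> \<circ>\<^sub>m pmap S a) \<circ>\<^sub>m (\<tau> \<circ>\<^sub>m pmap S a)"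
  have cong_iff_M: "(\<sigma>, \<tau>) \<in> \<rho> \<longleftrightarrow> (id_on S, ?M) \<in> \<rho>"
    using cong_iff_transported[OF \<sigma> \<tau> H A] a by (simp add: bij_betw_def)
  have M: "?M \<in> SR n" using map_comp_SR[OF pinv_SR[OF map_comp_SR[OF \<sigma> A]] map_comp_SR[OF \<tau> A]] .
  have inj: "inj_on \<sigma> (dom \<sigma>)" "inj_on \<tau> (dom \<tau>)" using SR_partial_inj \<sigma> \<tau> by blast+
  have dom_\<tau>: "dom \<tau> = dom \<sigma>" and ran_\<tau>: "ran \<tau> \<subseteq> ran \<sigma>" using H by (auto simp: H_rel_def)
  note M_eq_iff = transport_eq_pmap_iff[OF inj(1) a dom_\<tau> ran_\<tau>]
  show ?thesis
  proof
    assume st: "(\<sigma>, \<tau>) \<in> \<rho>"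
    obtain \<mu> where \<mu>: "\<mu> permutes S" "?M = pmap S \<mu>"
      using transport_is_pmap[OF inj a _ dom_\<tau> ran_\<tau>] finite_dom_SR[OF A] by auto
    then have "\<mu> \<in> cong_subgroup S G"
      using M cong_iff_M st by (simp add: cong_subgroup_def carrier)
    moreover have "\<forall>i\<in>S. \<tau> (a i) = \<sigma> (a (\<mu> i))"
      using M_eq_iff[of \<mu>] \<mu> by (simp add: permutes_image)
    ultimately show "\<exists>\<mu>\<in>cong_subgroup S G. \<forall>i\<in>S. \<tau> (a i) = \<sigma> (a (\<mu> i))" by blast
  next
    assume "\<exists>\<mu>\<in>cong_subgroup S G. \<forall>i\<in>S. \<tau> (a i) = \<sigma> (a (\<mu> i))"
    then obtain \<mu> where \<mu>: "\<mu> permutes S" "(id_on S, pmap S \<mu>) \<in> \<rho>" "\<forall>i\<in>S. \<tau> (a i) = \<sigma> (a (\<mu> i))"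
      by (auto simp: cong_subgroup_def carrier)
    then have "?M = pmap S \<mu>" using M_eq_iff[of \<mu>] by (simp add: permutes_image)
    with \<mu>(2) cong_iff_M show "(\<sigma>, \<tau>) \<in> \<rho>" by simp
  qed
qed

lemma cong_inW_iff:
  assumes zero_rank: "zero_rank \<le> m" and \<sigma>: "\<sigma> \<in> SR n" and \<tau>: "\<tau> \<in> SR n" and W: "inW n \<sigma>"
  shows "(\<sigma>, \<tau>) \<in> \<rho> \<longleftrightarrow> (\<exists>\<mu>\<in>cong_subgroup {1..n} (W_group n). \<forall>i\<in>{1..n}. \<tau> i = \<sigma> (\<mu> i))"
    (is "_ \<longleftrightarrow> ?perm")
proof -
  have dom_\<sigma>: "dom \<sigma> = {1..n}" using W by (simp add: inW_def)
  have H: "H_rel \<sigma> \<tau>" if "(\<sigma>, \<tau>) \<in> \<rho> \<or> ?perm"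
    using that
  proof
    assume "(\<sigma>, \<tau>) \<in> \<rho>"
    moreover have "\<sigma> \<notin> zero_class"
      using zero_class_iff_rk_le[OF \<sigma>] rk_inW[OF W] zero_rank n_eq m_pos by simp
    ultimately show ?thesis using zero_class_if_not_H_rel by blast
  next
    assume ?perm
    then obtain \<mu> where \<mu>: "\<mu> permutes {1..n}" "\<forall>i\<in>{1..n}. \<tau> i = \<sigma> (\<mu> i)"
      by (auto simp: cong_subgroup_def W_group_def)
    have "{1..n} \<subseteq> dom \<tau>"
    proof
      fix i assume i: "i \<in> {1..n}"
      then have "\<mu> i \<in> dom \<sigma>" using dom_\<sigma> permutes_in_image[OF \<mu>(1)] by simp
      with i \<mu>(2) show "i \<in> dom \<tau>" by (simp add: domIff)
    qed
    then have "inW n \<tau>" using SR_partial_inj[OF \<tau>] inW_if_full_dom[OF \<tau>] by blast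
    with W show ?thesis by (simp add: H_rel_def inW_def)
  qed
  show ?thesis
    using cong_iff_cong_subgroup[OF carrier_W_group_eq \<sigma> \<tau> H _ id_on_full_SR] dom_\<sigma> by auto
qed

lemma cong_rank_iff:
  assumes k: "k \<le> m" and zero_rank: "zero_rank < k"
    and \<sigma>: "\<sigma> \<in> SR n" and \<tau>: "\<tau> \<in> SR n" and rk: "rk \<sigma> = k"
  shows "(\<sigma>, \<tau>) \<in> \<rho> \<longleftrightarrow> H_rel \<sigma> \<tau> \<and> (\<exists>a. bij_betw a {1..k} (dom \<sigma>) \<and>
    (\<exists>\<mu>\<in>cong_subgroup {1..k} (sym_group k). \<forall>i\<in>{1..k}. \<tau> (a i) = \<sigma> (a (\<mu> i))))"
proof -
  have "\<not> inW n \<sigma>" using rk k rk_inW n_eq m_pos by auto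
  then have pa_dom: "pa (dom \<sigma>)" using SR_not_inW(1)[OF \<sigma>] by blast
  have A: "pmap {1..k} a \<in> SR n" if "bij_betw a {1..k} (dom \<sigma>)" for a
    using that pa_dom proper_admissible_initial[OF k] by (intro pmap_SR) (auto simp: bij_betw_def)
  note cong_iff = cong_iff_cong_subgroup[OF carrier_sym_group_eq[OF k] \<sigma> \<tau> _ _ A]
  show ?thesis
  proof
    assume st: "(\<sigma>, \<tau>) \<in> \<rho>"
    have "\<sigma> \<notin> zero_class" using zero_class_iff_rk_le[OF \<sigma>] rk zero_rank by simp
    then have H: "H_rel \<sigma> \<tau>" using zero_class_if_not_H_rel[OF st] by blast
    obtain a where a: "bij_betw a {1..k} (dom \<sigma>)"
      using ex_bij_betw_nat_finite_1[OF finite_dom_SR[OF \<sigma>]] rk by (auto simp: rk_def)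
    with H st cong_iff show "H_rel \<sigma> \<tau> \<and> (\<exists>a. bij_betw a {1..k} (dom \<sigma>) \<and>
      (\<exists>\<mu>\<in>cong_subgroup {1..k} (sym_group k). \<forall>i\<in>{1..k}. \<tau> (a i) = \<sigma> (a (\<mu> i))))" by blast
  qed (use cong_iff in blast)
qed

theorem cong_eq_congW:
  assumes "zero_rank = m" shows "\<rho> = congW n (cong_subgroup {1..n} (W_group n))"
proof -
  have "(\<sigma>, \<tau>) \<in> \<rho> \<longleftrightarrow> (\<sigma>, \<tau>) \<in> congW n (cong_subgroup {1..n} (W_group n))" for \<sigma> \<tau>
  proof (cases "\<sigma> \<in> SR n \<and> \<tau> \<in> SR n")
    case True
    then consider "rk \<sigma> < n" | "rk \<sigma> = n" using rk_SR_le[of \<sigma>] by fastforce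
    then show ?thesis
    proof cases
      case 1
      then show ?thesis
        using True assms cong_below_zero_rank rk_SR_less_iff by (simp add: congW_def)
    next
      case 2
      then show ?thesis
        using True assms cong_inW_iff inW_iff_rk by (simp add: congW_def)
    qed
  qed (use cong_SR in \<open>auto simp: congW_def\<close>)
  then show ?thesis by auto
qed

theorem cong_eq_congS:
  assumes "zero_rank < m"
  shows "\<rho> = congS n (Suc zero_rank) (cong_subgroup {1..Suc zero_rank} (sym_group (Suc zero_rank)))"
proof -
  let ?k = "Suc zero_rank"
  have "(\<sigma>, \<tau>) \<in> \<rho> \<longleftrightarrow> (\<sigma>, \<tau>) \<in> congS n ?k (cong_subgroup {1..?k} (sym_group ?k))" for \<sigma> \<tau>
  proof (cases "\<sigma> \<in> SR n \<and> \<tau> \<in> SR n")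
    case True
    then show ?thesis
      using assms cong_below_zero_rank[of \<sigma> \<tau>] cong_rank_iff[of ?k \<sigma> \<tau>]
        cong_eq_if_rk_gt[of \<sigma> \<tau>] cong_refl[of \<sigma>]
      by (auto simp: congS_def less_Suc_eq_le)
  qed (use cong_SR in \<open>auto simp: congS_def\<close>)
  then show ?thesis by auto
qed

end

theorem theorem5p2:
  fixes m n :: nat and \<rho> :: "((nat \<rightharpoonup> nat) \<times> (nat \<rightharpoonup> nat)) set"
  assumes "m \<ge> 1" and "n = 2 * m"
    and "is_congruence n \<rho>"
    and "\<rho> \<noteq> SR n \<times> SR n"
  shows "(\<exists>k\<in>{1..m}. \<exists>N. N \<lhd> sym_group k \<and> \<rho> = congS n k N)
       \<or> (\<exists>N. N \<lhd> W_group n \<and> \<rho> = congW n N)"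
proof -
  interpret SR_congruence m n \<rho>
    using assms(1-3) by unfold_locales auto
  have "zero_rank \<le> m" using zero_rank_le_m[OF assms(4)] .
  then consider "zero_rank = m" | "zero_rank < m" by linarith
  then show ?thesis
  proof cases
    case 1
    have "mult (W_group n) = (\<circ>)" "one (W_group n) = id" by (simp_all add: W_group_def)
    then have "cong_subgroup {1..n} (W_group n) \<lhd> W_group n"
      using cong_subgroup_normal W_group_is_group carrier_W_group_eq by blast
    then show ?thesis using cong_eq_congW[OF 1] by blast
  next
    case 2
    let ?k = "Suc zero_rank"
    have "mult (sym_group ?k) = (\<circ>)" "one (sym_group ?k) = id" by (simp_all add: sym_group_def)
    then have "cong_subgroup {1..?k} (sym_group ?k) \<lhd> sym_group ?k"
      using cong_subgroup_normal sym_group_is_group carrier_sym_group_eq[of ?k] 2 by simp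
    moreover have "?k \<in> {1..m}" using 2 by simp
    ultimately show ?thesis using cong_eq_congS[OF 2] by blast
  qed
qed

end
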